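(* Let $V=\{v_1,\dots,v_n\}$ be the cities of a symmetric TSP instance on the complete graph $K_n$ with nonnegative edge weights $w$. Let $I$ (white edges) and $X$ (excluded edges) be disjoint sets of edges, and let $g$ be a Hamiltonian cycle on $V$ that contains every edge of $I$ and no edge of $X$. Then the weight of the constrained 1-tree with respect to $(I,X)$ is at most the weight $w(g)=\sum_{e\in g}w(e)$.
   Context: The constrained 1-tree with respect to $(I,X)$ is built in two steps. (1) Constrained MST: run Prim's algorithm on the complete graph on $\{v_2,\dots,v_n\}$ with all edges of $X$ discarded, where any edge of $I$ crossing the current cut is given the highest priority (selected before any edge not in $I$) and the remaining candidate edges are ranked by weight. (2) Connect $v_1$ to this tree by two edges: every edge of $I$ incident with $v_1$ is selected regardless of cost, every edge of $X$ incident with $v_1$ is discarded, and the remaining edges incident with $v_1$ are selected in order of increasing weight until two edges incident with $v_1$ have been chosen. The constrained 1-tree is the union of the constrained MST and these two edges; its weight is the sum of its edge weights. In the paper's setting, $I$ and $X$ are the white and excluded edges of a Stem-and-Cycle configuration $c$ in an ejection chain, and $g$ is the goal tour toward which these constraints lead, which therefore contains all of $I$ and none of $X$. *)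

theory Defs
  imports Complex_Main
begin

definition complete_edges :: "'a set \<Rightarrow> 'a set set" where
  "complete_edges V = {e. \<exists>u v. u \<in> V \<and> v \<in> V \<and> u \<noteq> v \<and> e = {u, v}}"

definition cycle_edges :: "'a list \<Rightarrow> 'a set set" where
  "cycle_edges vs = {{vs ! i, vs ! ((i + 1) mod length vs)} | i. i < length vs}"

definition hamiltonian_cycle :: "'a set \<Rightarrow> 'a set set \<Rightarrow> bool" where
  "hamiltonian_cycle V g \<longleftrightarrow>
     (\<exists>vs. distinct vs \<and> set vs = V \<and> length vs \<ge> 3 \<and> g = cycle_edges vs)"

definition crossing :: "'a set \<Rightarrow> 'a set \<Rightarrow> 'a set \<Rightarrow> bool" where
  "crossing W S e \<longleftrightarrow> (\<exists>u x. u \<in> S \<and> x \<in> W - S \<and> e = {u, x})"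

(* Prim's selection rule: edges of X are discarded; an edge of I crossing the cut has
   priority over any edge not in I; within each priority class, edges are ranked by weight. *)
definition prim_choice ::
  "'a set \<Rightarrow> ('a set \<Rightarrow> real) \<Rightarrow> 'a set set \<Rightarrow> 'a set set \<Rightarrow> 'a set \<Rightarrow> 'a set \<Rightarrow> bool" where
  "prim_choice W w I X S e \<longleftrightarrow>
     crossing W S e \<and> e \<notin> X \<and>
     ((e \<in> I \<and> (\<forall>e'. crossing W S e' \<and> e' \<in> I \<and> e' \<notin> X \<longrightarrow> w e \<le> w e')) \<or>
      (e \<notin> I \<and> \<not> (\<exists>e'. crossing W S e' \<and> e' \<in> I \<and> e' \<notin> X) \<and>
         (\<forall>e'. crossing W S e' \<and> e' \<notin> X \<longrightarrow> w e \<le> w e')))"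

inductive prim_state ::
  "'a set \<Rightarrow> ('a set \<Rightarrow> real) \<Rightarrow> 'a set set \<Rightarrow> 'a set set \<Rightarrow> 'a set \<Rightarrow> 'a set set \<Rightarrow> bool"
  for W w I X where
  start: "r \<in> W \<Longrightarrow> prim_state W w I X {r} {}"
| step: "prim_state W w I X S T \<Longrightarrow> u \<in> S \<Longrightarrow> x \<in> W - S \<Longrightarrow>
         prim_choice W w I X S {u, x} \<Longrightarrow>
         prim_state W w I X (insert x S) (insert {u, x} T)"

definition constrained_mst ::
  "'a set \<Rightarrow> ('a set \<Rightarrow> real) \<Rightarrow> 'a set set \<Rightarrow> 'a set set \<Rightarrow> 'a set set \<Rightarrow> bool" where
  "constrained_mst W w I X T \<longleftrightarrow> prim_state W w I X W T"

(* All I-edges at v1 are taken, X-edges at v1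
   are discarded, remaining edges at v1 are taken greedily by increasing weight until two
   edges at v1 are chosen. *)
definition v1_edges :: "'a set \<Rightarrow> 'a \<Rightarrow> 'a set set" where
  "v1_edges V v1 = {{v1, x} | x. x \<in> V \<and> x \<noteq> v1}"

definition v1_connection ::
  "'a set \<Rightarrow> 'a \<Rightarrow> ('a set \<Rightarrow> real) \<Rightarrow> 'a set set \<Rightarrow> 'a set set \<Rightarrow> 'a set set \<Rightarrow> bool" where
  "v1_connection V v1 w I X F \<longleftrightarrow>
     (let Iv = v1_edges V v1 \<inter> I; C = v1_edges V v1 - I - X in
      \<exists>G. G \<subseteq> C \<and> card G = 2 - card Iv \<and> F = Iv \<union> G \<and>
          (\<forall>e\<in>G. \<forall>e'\<in>C - G. w e \<le> w e'))"

definition constrained_one_tree ::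
  "'a set \<Rightarrow> 'a \<Rightarrow> ('a set \<Rightarrow> real) \<Rightarrow> 'a set set \<Rightarrow> 'a set set \<Rightarrow> 'a set set \<Rightarrow> bool" where
  "constrained_one_tree V v1 w I X OT \<longleftrightarrow>
     (\<exists>T F. constrained_mst (V - {v1}) w I X T \<and> v1_connection V v1 w I X F \<and> OT = T \<union> F)"

end

theory Submission
  imports Defs
begin

(* Removing v1 from the goal tour g leaves a Hamiltonian path on V - {v1}: a connected
   spanning edge set that contains the white edges there and avoids the excluded ones.
   Every state of the constrained Prim run extends some edge set with these properties that
   is no heavier than that path: when Prim adds a non-white edge e across the current cut, a
   cycle exchange replaces a crossing edge f of the set by e, and f is neither white (no
   white edge crosses the cut at that moment) nor lighter than e. Hence the constrained MST
   weighs at most the path. At v1 the tour has at least two edges, including all white ones,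
   and the greedy choice of the remaining edges at v1 costs no more than the tour's
   remaining edges there. *)

definition edge_rel :: "'a set set \<Rightarrow> ('a \<times> 'a) set" where
  "edge_rel Q = {(p, q). {p, q} \<in> Q}"

definition connected_on :: "'a set \<Rightarrow> 'a set set \<Rightarrow> bool" where
  "connected_on W Q \<longleftrightarrow> (\<forall>a\<in>W. \<forall>b\<in>W. (a, b) \<in> (edge_rel Q)\<^sup>*)"

lemma doubleton_in_complete_edges:
  "{c, d} \<in> complete_edges W \<longleftrightarrow> c \<in> W \<and> d \<in> W \<and> c \<noteq> d"
  unfolding complete_edges_def by (auto simp: doubleton_eq_iff)

lemma rtrancl_edge_rel_mono: "Q \<subseteq> Q' \<Longrightarrow> (edge_rel Q)\<^sup>* \<subseteq> (edge_rel Q')\<^sup>*"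
  by (rule rtrancl_mono) (auto simp: edge_rel_def)

lemma rtrancl_edge_rel_sym: "(a, b) \<in> (edge_rel Q)\<^sup>* \<Longrightarrow> (b, a) \<in> (edge_rel Q)\<^sup>*"
proof -
  have "sym (edge_rel Q)" by (auto simp: sym_def edge_rel_def insert_commute)
  then show "(a, b) \<in> (edge_rel Q)\<^sup>* \<Longrightarrow> (b, a) \<in> (edge_rel Q)\<^sup>*"
    by (metis sym_rtrancl symD)
qed

lemma rtrancl_edge_rel_Diff_edge:
  assumes "(a, b) \<in> (edge_rel Q)\<^sup>*"
  shows "(a, b) \<in> (edge_rel (Q - {f}))\<^sup>* \<or>
    (\<exists>c d. f = {c, d} \<and> (a, c) \<in> (edge_rel (Q - {f}))\<^sup>* \<and> (d, b) \<in> (edge_rel (Q - {f}))\<^sup>*)"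
  using assms
proof (induction rule: rtrancl_induct)
  case base
  then show ?case by simp
next
  case (step y z)
  show ?case
  proof (cases "{y, z} = f")
    case True
    from step.IH show ?thesis
    proof
      assume "\<exists>c d. f = {c, d} \<and> (a, c) \<in> (edge_rel (Q - {f}))\<^sup>* \<and>
        (d, y) \<in> (edge_rel (Q - {f}))\<^sup>*"
      then obtain c d where cd: "f = {c, d}" "(a, c) \<in> (edge_rel (Q - {f}))\<^sup>*"
        "(d, y) \<in> (edge_rel (Q - {f}))\<^sup>*" by blast
      with True have "z = c \<or> z = d" by auto
      with cd show ?thesis by blast
    qed (use True in blast)
  next
    case False
    with step.hyps(2) have yz: "(y, z) \<in> edge_rel (Q - {f})" by (simp add: edge_rel_def)
    from step.IH show ?thesis
    proof
      assume "\<exists>c d. f = {c, d} \<and> (a, c) \<in> (edge_rel (Q - {f}))\<^sup>* \<and>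
        (d, y) \<in> (edge_rel (Q - {f}))\<^sup>*"
      with yz show ?thesis by (blast intro: rtrancl.rtrancl_into_rtrancl)
    qed (use yz in \<open>blast intro: rtrancl.rtrancl_into_rtrancl\<close>)
  qed
qed

lemma rtrancl_edge_rel_crossing_edge:
  assumes "(a, b) \<in> (edge_rel Q)\<^sup>*" "a \<in> S" "b \<notin> S"
  shows "\<exists>c d. {c, d} \<in> Q \<and> c \<in> S \<and> d \<notin> S"
  using assms
proof (induction rule: rtrancl_induct)
  case (step y z)
  then show ?case by (cases "y \<in> S") (auto simp: edge_rel_def)
qed simp

text \<open>Walks may reuse edges, so the crossing edge is found by induction on
  Q: either the walk avoids the first crossing edge found and we recurse on the smaller edge set,
  or removing that edge splits the walk into two halves that ux joins again.\<close>

lemma exchange_crossing_edge: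
  assumes "finite Q" "(u, x) \<in> (edge_rel Q)\<^sup>*" "u \<in> S" "x \<notin> S"
  shows "\<exists>c d. {c, d} \<in> Q \<and> c \<in> S \<and> d \<notin> S \<and>
    (c, d) \<in> (edge_rel (insert {u, x} (Q - {{c, d}})))\<^sup>*"
  using assms
proof (induction Q rule: finite_psubset_induct)
  case (psubset Q)
  obtain c d where cd: "{c, d} \<in> Q" "c \<in> S" "d \<notin> S"
    using rtrancl_edge_rel_crossing_edge[OF psubset.prems(1-3)] by blast
  define f where "f = {c, d}"
  define Q' where "Q' = insert {u, x} (Q - {f})"
  have ux: "(u, x) \<in> (edge_rel Q')\<^sup>*" "(x, u) \<in> (edge_rel Q')\<^sup>*"
    unfolding Q'_def edge_rel_def by (auto simp: insert_commute)
  have Q_f_Q': "(edge_rel (Q - {f}))\<^sup>* \<subseteq> (edge_rel Q')\<^sup>*"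
    unfolding Q'_def by (rule rtrancl_edge_rel_mono) blast
  from rtrancl_edge_rel_Diff_edge[OF psubset.prems(1), of f] show ?case
  proof
    assume walk: "(u, x) \<in> (edge_rel (Q - {f}))\<^sup>*"
    have "Q - {f} \<subset> Q" using cd(1) f_def by blast
    then obtain c' d' where c'd': "{c', d'} \<in> Q - {f}" "c' \<in> S" "d' \<notin> S"
       "(c', d') \<in> (edge_rel (insert {u, x} (Q - {f} - {{c', d'}})))\<^sup>*"
      using psubset.IH[OF _ walk psubset.prems(2,3)] by blast
    have "(edge_rel (insert {u, x} (Q - {f} - {{c', d'}})))\<^sup>*
        \<subseteq> (edge_rel (insert {u, x} (Q - {{c', d'}})))\<^sup>*"
      by (rule rtrancl_edge_rel_mono) blast
    with c'd' show ?thesis by blast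
  next
    assume "\<exists>c1 d1. f = {c1, d1} \<and> (u, c1) \<in> (edge_rel (Q - {f}))\<^sup>* \<and>
      (d1, x) \<in> (edge_rel (Q - {f}))\<^sup>*"
    then obtain c1 d1 where "f = {c1, d1}"
      and c1d1: "(u, c1) \<in> (edge_rel Q')\<^sup>*" "(d1, x) \<in> (edge_rel Q')\<^sup>*"
      using Q_f_Q' by blast
    have "(c, d) \<in> (edge_rel Q')\<^sup>*"
    proof (cases "c1 = c")
      case True
      with \<open>f = {c1, d1}\<close> f_def have "d1 = d" by (metis doubleton_eq_iff)
      with True c1d1 ux show ?thesis by (meson rtrancl_edge_rel_sym rtrancl_trans)
    next
      case False
      with \<open>f = {c1, d1}\<close> f_def have "c1 = d" "d1 = c" by (metis doubleton_eq_iff)+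
      with c1d1 ux show ?thesis by (meson rtrancl_edge_rel_sym rtrancl_trans)
    qed
    with cd show ?thesis unfolding Q'_def f_def by blast
  qed
qed

lemma connected_on_exchange:
  assumes "connected_on W Q" "f \<in> Q" "f = {c, d}"
    and "(c, d) \<in> (edge_rel (insert e (Q - {f})))\<^sup>*"
  shows "connected_on W (insert e (Q - {f}))"
proof -
  let ?Q' = "insert e (Q - {f})"
  have "edge_rel Q \<subseteq> (edge_rel ?Q')\<^sup>*"
  proof
    fix p assume "p \<in> edge_rel Q"
    then obtain p1 p2 where p: "p = (p1, p2)" "{p1, p2} \<in> Q" unfolding edge_rel_def by blast
    show "p \<in> (edge_rel ?Q')\<^sup>*"
    proof (cases "{p1, p2} = f")
      case True
      then have "(p1, p2) = (c, d) \<or> (p1, p2) = (d, c)"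
        using assms(3) by (auto simp: doubleton_eq_iff)
      with assms(4) p(1) show ?thesis by (auto intro: rtrancl_edge_rel_sym)
    next
      case False
      with p have "p \<in> edge_rel ?Q'" by (simp add: edge_rel_def)
      then show ?thesis by blast
    qed
  qed
  then have "(edge_rel Q)\<^sup>* \<subseteq> (edge_rel ?Q')\<^sup>*" by (metis rtrancl_subset_rtrancl)
  with assms(1) show ?thesis unfolding connected_on_def by blast
qed

lemma connected_on_path:
  assumes "\<And>i. i + 1 < length vs \<Longrightarrow> {vs ! i, vs ! (i + 1)} \<in> P"
  shows "connected_on (set vs) P"
proof -
  have from_first: "(vs ! 0, vs ! i) \<in> (edge_rel P)\<^sup>*" if "i < length vs" for i
    using that
  proof (induction i)
    case (Suc i)
    then have "(vs ! i, vs ! Suc i) \<in> edge_rel P" using assms[of i] by (simp add: edge_rel_def)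
    with Suc show ?case by (meson Suc_lessD rtrancl.rtrancl_into_rtrancl)
  qed simp
  show ?thesis unfolding connected_on_def
  proof (intro ballI)
    fix a b assume "a \<in> set vs" "b \<in> set vs"
    then obtain i j where "i < length vs" "a = vs ! i" "j < length vs" "b = vs ! j"
      by (metis in_set_conv_nth)
    with from_first show "(a, b) \<in> (edge_rel P)\<^sup>*" by (meson rtrancl_edge_rel_sym rtrancl_trans)
  qed
qed

definition constrained_spanning :: "'a set \<Rightarrow> 'a set set \<Rightarrow> 'a set set \<Rightarrow> 'a set set \<Rightarrow> bool" where
  "constrained_spanning W I X Q \<longleftrightarrow> finite Q \<and> Q \<subseteq> complete_edges W \<and> connected_on W Q \<and>
     I \<inter> complete_edges W \<subseteq> Q \<and> Q \<inter> X = {}"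

lemma prim_state_subset: "prim_state W w I X S T \<Longrightarrow> S \<subseteq> W"
  by (induction rule: prim_state.induct) auto

lemma prim_state_edges_subset: "prim_state W w I X S T \<Longrightarrow> t \<in> T \<Longrightarrow> t \<subseteq> S"
  by (induction rule: prim_state.induct) auto

lemma prim_state_edges_complete: "prim_state W w I X S T \<Longrightarrow> finite T \<and> T \<subseteq> complete_edges W"
  by (induction rule: prim_state.induct)
    (auto simp: doubleton_in_complete_edges dest: prim_state_subset)

lemma prim_step_exchange:
  assumes Q: "constrained_spanning W I X Q" "T \<subseteq> Q"
    and S: "S \<subseteq> W" "\<forall>t\<in>T. t \<subseteq> S"
    and ux: "u \<in> S" "x \<in> W - S"
    and choice: "prim_choice W w I X S {u, x}"
  shows "\<exists>Q'. constrained_spanning W I X Q' \<and> insert {u, x} T \<subseteq> Q' \<and> sum w Q' \<le> sum w Q"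
proof (cases "{u, x} \<in> Q")
  case True
  with Q show ?thesis by blast
next
  case False
  from Q(1) have fin: "finite Q" and compl: "Q \<subseteq> complete_edges W" and conn: "connected_on W Q"
    and white: "I \<inter> complete_edges W \<subseteq> Q" and excl: "Q \<inter> X = {}"
    unfolding constrained_spanning_def by blast+
  have ux_edge: "{u, x} \<in> complete_edges W"
    using S(1) ux by (auto simp: doubleton_in_complete_edges)
  with white False have "{u, x} \<notin> I" by blast
  then have ux_X: "{u, x} \<notin> X"
    and no_white: "\<not> (\<exists>e. crossing W S e \<and> e \<in> I \<and> e \<notin> X)"
    and lightest: "\<forall>e. crossing W S e \<and> e \<notin> X \<longrightarrow> w {u, x} \<le> w e"
    using choice unfolding prim_choice_def by auto
  have "(u, x) \<in> (edge_rel Q)\<^sup>*"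
    using conn S(1) ux unfolding connected_on_def by blast
  moreover have "x \<notin> S" using ux(2) by blast
  ultimately obtain c d where cd: "{c, d} \<in> Q" "c \<in> S" "d \<notin> S"
    and bridged: "(c, d) \<in> (edge_rel (insert {u, x} (Q - {{c, d}})))\<^sup>*"
    using exchange_crossing_edge[OF fin _ ux(1)] by blast
  define Q' where "Q' = insert {u, x} (Q - {{c, d}})"
  have "d \<in> W" using cd(1) compl by (auto simp: doubleton_in_complete_edges)
  with cd(2,3) have "crossing W S {c, d}" unfolding crossing_def by blast
  moreover have "{c, d} \<notin> X" using cd(1) excl by blast
  ultimately have cd_I: "{c, d} \<notin> I" and light: "w {u, x} \<le> w {c, d}"
    using no_white lightest by blast+
  have "connected_on W Q'"
    unfolding Q'_def using connected_on_exchange[OF conn cd(1) refl bridged] .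
  moreover have "Q' \<subseteq> complete_edges W" "I \<inter> complete_edges W \<subseteq> Q'" "Q' \<inter> X = {}"
    using compl ux_edge white cd_I excl ux_X unfolding Q'_def by blast+
  ultimately have "constrained_spanning W I X Q'"
    using fin unfolding Q'_def constrained_spanning_def by simp
  moreover have "insert {u, x} T \<subseteq> Q'"
    using Q(2) S(2) cd(3) unfolding Q'_def by blast
  moreover have "sum w Q' = sum w Q - w {c, d} + w {u, x}"
    using fin False cd(1) unfolding Q'_def by (simp add: sum_diff1)
  ultimately show ?thesis using light by (intro exI[of _ Q']) simp
qed

lemma prim_state_exchange:
  assumes "prim_state W w I X S T" "constrained_spanning W I X P"
  shows "\<exists>Q. constrained_spanning W I X Q \<and> T \<subseteq> Q \<and> sum w Q \<le> sum w P"
  using assms(1)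
proof (induction rule: prim_state.induct)
  case (start r)
  with assms(2) show ?case by blast
next
  case (step S T u x)
  then obtain Q where Q: "constrained_spanning W I X Q" "T \<subseteq> Q" "sum w Q \<le> sum w P"
    by blast
  have "\<forall>t\<in>T. t \<subseteq> S" using prim_state_edges_subset[OF step.hyps(1)] by blast
  with prim_step_exchange[OF Q(1,2) prim_state_subset[OF step.hyps(1)] _ step.hyps(2-4)]
  obtain Q' where "constrained_spanning W I X Q'" "insert {u, x} T \<subseteq> Q'" "sum w Q' \<le> sum w Q"
    by blast
  with Q(3) show ?case by force
qed

lemma constrained_mst_weight_le:
  assumes "constrained_mst W w I X T" "constrained_spanning W I X P"
    and "\<forall>e\<in>complete_edges W. w e \<ge> 0"
  shows "sum w T \<le> sum w P"
proof -
  have "prim_state W w I X W T" using assms(1) unfolding constrained_mst_def .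
  then obtain Q where Q: "constrained_spanning W I X Q" "T \<subseteq> Q" "sum w Q \<le> sum w P"
    using prim_state_exchange assms(2) by blast
  then have "sum w T \<le> sum w Q"
    using assms(3) unfolding constrained_spanning_def by (intro sum_mono2) auto
  with Q(3) show ?thesis by linarith
qed

lemma cycle_edges_conv_image:
  "cycle_edges vs = (\<lambda>i. {vs ! i, vs ! ((i + 1) mod length vs)}) ` {..<length vs}"
  unfolding cycle_edges_def by auto

lemma finite_cycle_edges: "finite (cycle_edges vs)"
  unfolding cycle_edges_conv_image by simp

lemma image_add_mod_lessThan:
  assumes "0 < (n::nat)"
  shows "(\<lambda>i. (m + i) mod n) ` {..<n} = {..<n}"
proof
  show "{..<n} \<subseteq> (\<lambda>i. (m + i) mod n) ` {..<n}"
  proof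
    fix j assume j: "j \<in> {..<n}"
    have "m mod n < n" using assms by simp
    have "(m + (n - m mod n + j) mod n) mod n = (m mod n + (n - m mod n + j)) mod n"
      by (simp add: mod_add_right_eq mod_add_left_eq)
    also have "m mod n + (n - m mod n + j) = n + j" using \<open>m mod n < n\<close> by simp
    also have "(n + j) mod n = j" using j by simp
    finally have "j = (\<lambda>i. (m + i) mod n) ((n - m mod n + j) mod n)" by simp
    moreover have "(n - m mod n + j) mod n \<in> {..<n}" using assms by simp
    ultimately show "j \<in> (\<lambda>i. (m + i) mod n) ` {..<n}" by (rule image_eqI)
  qed
qed (use assms in auto)

lemma cycle_edges_rotate: "cycle_edges (rotate m vs) = cycle_edges vs"
proof (cases "vs = []")
  case False
  let ?n = "length vs"
  let ?edge = "\<lambda>j. {vs ! j, vs ! ((j + 1) mod ?n)}"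
  have n: "0 < ?n" using False by simp
  have "cycle_edges (rotate m vs) = (\<lambda>i. ?edge ((m + i) mod ?n)) ` {..<?n}"
    unfolding cycle_edges_conv_image using n
    by (intro image_cong) (simp_all add: nth_rotate mod_add_right_eq mod_Suc_eq)
  also have "\<dots> = ?edge ` (\<lambda>i. (m + i) mod ?n) ` {..<?n}" by (simp add: image_image)
  also have "\<dots> = cycle_edges vs"
    unfolding image_add_mod_lessThan[OF n] cycle_edges_conv_image ..
  finally show ?thesis .
qed simp

lemma cycle_edges_subset_complete_edges:
  assumes "distinct vs" "2 \<le> length vs"
  shows "cycle_edges vs \<subseteq> complete_edges (set vs)"
proof
  fix e assume "e \<in> cycle_edges vs"
  then obtain i where i: "i < length vs" and e: "e = {vs ! i, vs ! ((i + 1) mod length vs)}"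
    unfolding cycle_edges_def by blast
  let ?j = "(i + 1) mod length vs"
  have "0 < length vs" using i by linarith
  then have j: "?j < length vs" by simp
  have "?j \<noteq> i"
  proof (cases "i + 1 < length vs")
    case False
    with i assms(2) have "i + 1 = length vs" "0 < i" by auto
    then show ?thesis by simp
  qed simp
  with assms(1) i j have "vs ! i \<noteq> vs ! ?j" by (simp add: nth_eq_iff_index_eq)
  with i j show "e \<in> complete_edges (set vs)"
    unfolding e doubleton_in_complete_edges by simp
qed

lemma cycle_edges_Cons_path:
  "i + 1 < length vs \<Longrightarrow> {vs ! i, vs ! (i + 1)} \<in> cycle_edges (v # vs)"
  unfolding cycle_edges_def by (intro CollectI exI[of _ "Suc i"]) simp

lemma cycle_edges_Cons_ends:
  assumes "vs \<noteq> []"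
  shows "{v, hd vs} \<in> cycle_edges (v # vs)" "{v, last vs} \<in> cycle_edges (v # vs)"
proof -
  have "{v, hd vs} = {(v # vs) ! 0, (v # vs) ! ((0 + 1) mod length (v # vs))}"
    using assms by (simp add: hd_conv_nth)
  then show "{v, hd vs} \<in> cycle_edges (v # vs)"
    unfolding cycle_edges_conv_image by (rule image_eqI) simp
  have "{v, last vs} = {(v # vs) ! length vs, (v # vs) ! ((length vs + 1) mod length (v # vs))}"
    using assms by (simp add: last_conv_nth nth_Cons' insert_commute)
  then show "{v, last vs} \<in> cycle_edges (v # vs)"
    unfolding cycle_edges_conv_image by (rule image_eqI) simp
qed

lemma hamiltonian_cycle_starting_at:
  assumes "hamiltonian_cycle V g" "v \<in> V"
  obtains vs where "distinct (v # vs)" "set (v # vs) = V" "2 \<le> length vs"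
    "g = cycle_edges (v # vs)"
proof -
  obtain us where us: "distinct us" "set us = V" "3 \<le> length us" "g = cycle_edges us"
    using assms(1) unfolding hamiltonian_cycle_def by blast
  then obtain k where k: "k < length us" "us ! k = v" using assms(2) by (metis in_set_conv_nth)
  moreover have "0 < length us" using k(1) by linarith
  ultimately have "rotate k us ! 0 = v" by (simp add: nth_rotate)
  moreover have "rotate k us \<noteq> []" using us(3) by auto
  ultimately obtain vs where r: "rotate k us = v # vs" by (cases "rotate k us") auto
  show thesis
  proof (rule that)
    show "distinct (v # vs)" "set (v # vs) = V" "g = cycle_edges (v # vs)"
      unfolding r[symmetric] using us by (simp_all add: cycle_edges_rotate)
    have "length (v # vs) = length us" unfolding r[symmetric] by simp
    with us(3) show "2 \<le> length vs" by simp
  qed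
qed

lemma hamiltonian_cycle_complete_edges:
  "hamiltonian_cycle V g \<Longrightarrow> finite g \<and> g \<subseteq> complete_edges V"
  unfolding hamiltonian_cycle_def
  using finite_cycle_edges cycle_edges_subset_complete_edges by fastforce

lemma hamiltonian_cycle_delete_vertex:
  assumes "hamiltonian_cycle V g" "v \<in> V"
  shows "connected_on (V - {v}) {e \<in> g. v \<notin> e}"
proof -
  obtain vs where vs: "distinct (v # vs)" "set (v # vs) = V" "g = cycle_edges (v # vs)"
    using hamiltonian_cycle_starting_at assms by metis
  then have "V - {v} = set vs" by auto
  moreover have "{vs ! i, vs ! (i + 1)} \<in> {e \<in> g. v \<notin> e}" if "i + 1 < length vs" for i
    using vs(1,3) that cycle_edges_Cons_path by (auto dest: nth_mem)
  ultimately show ?thesis by (simp add: connected_on_path)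
qed

lemma hamiltonian_cycle_two_edges_at:
  assumes "hamiltonian_cycle V g" "v \<in> V"
  shows "2 \<le> card {e \<in> g. v \<in> e}"
proof -
  obtain vs where vs: "distinct (v # vs)" "2 \<le> length vs" "g = cycle_edges (v # vs)"
    using hamiltonian_cycle_starting_at assms by metis
  then have ne: "vs \<noteq> []" by auto
  have "hd vs \<noteq> last vs"
    using vs(1,2) ne by (simp add: hd_conv_nth last_conv_nth nth_eq_iff_index_eq)
  then have "card {{v, hd vs}, {v, last vs}} = 2" by (auto simp: doubleton_eq_iff)
  moreover have "{{v, hd vs}, {v, last vs}} \<subseteq> {e \<in> g. v \<in> e}"
    using cycle_edges_Cons_ends[OF ne] vs(3) by auto
  moreover have "finite g" using vs(3) finite_cycle_edges by simp
  then have "finite {e \<in> g. v \<in> e}" by simp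
  ultimately show ?thesis by (metis card_mono)
qed

lemma greedy_subset_sum_le:
  fixes w :: "'a \<Rightarrow> real"
  assumes "finite C" "G \<subseteq> C" "H \<subseteq> C" "card G \<le> card H"
    "\<forall>e\<in>G. \<forall>e'\<in>C - G. w e \<le> w e'" "\<forall>e\<in>H. w e \<ge> 0"
  shows "sum w G \<le> sum w H"
proof -
  have fG: "finite G" "finite H" using assms(1-3) finite_subset by auto
  have sG: "sum w G = sum w (G \<inter> H) + sum w (G - H)"
    using fG(1) by (rule sum.Int_Diff)
  have sH: "sum w H = sum w (G \<inter> H) + sum w (H - G)"
    using sum.Int_Diff[OF fG(2), of w G] by (simp add: Int_commute)
  have cd: "card (G - H) \<le> card (H - G)"
  proof -
    have "card G = card (G \<inter> H) + card (G - H)" using fG(1) by (rule card_Int_Diff)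
    moreover have "card H = card (G \<inter> H) + card (H - G)"
      using card_Int_Diff[OF fG(2), of G] by (simp add: Int_commute)
    ultimately show ?thesis using assms(4) by simp
  qed
  show ?thesis
  proof (cases "H - G = {}")
    case True
    then have "card (G - H) = 0" using cd by (metis card.empty le_zero_eq)
    then have "G - H = {}" using fG by simp
    then show ?thesis using sG sH True by simp
  next
    case False
    define a where "a = Min (w ` (H - G))"
    have fin: "finite (w ` (H - G))" using fG by simp
    obtain e0 where e0: "e0 \<in> H - G" "a = w e0" unfolding a_def
      using Min_in[OF fin] False by auto
    have a0: "a \<ge> 0" using e0 assms(6) by auto
    have le1: "\<forall>e\<in>G - H. w e \<le> a" using e0 assms(5,3) by auto
    have le2: "\<forall>e\<in>H - G. a \<le> w e" unfolding a_def using fin by auto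
    have "sum w (G - H) \<le> sum (\<lambda>_. a) (G - H)" using le1 by (intro sum_mono) auto
    also have "\<dots> = real (card (G - H)) * a" by simp
    also have "\<dots> \<le> real (card (H - G)) * a" using cd a0 by (intro mult_right_mono) auto
    also have "\<dots> = sum (\<lambda>_. a) (H - G)" by simp
    also have "\<dots> \<le> sum w (H - G)" using le2 by (intro sum_mono) auto
    finally show ?thesis using sG sH by simp
  qed
qed

lemma complete_edges_Diff_singleton:
  "complete_edges (V - {v}) = {e \<in> complete_edges V. v \<notin> e}"
  unfolding complete_edges_def by auto

lemma v1_edges_eq_complete_edges_at:
  "v \<in> V \<Longrightarrow> v1_edges V v = {e \<in> complete_edges V. v \<in> e}"
  unfolding v1_edges_def complete_edges_def by (auto simp: insert_commute)

lemma finite_v1_edges: "finite V \<Longrightarrow> finite (v1_edges V v1)"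
  unfolding v1_edges_def by (rule finite_image_set) simp

lemma v1_connection_subset: "v1_connection V v1 w I X F \<Longrightarrow> F \<subseteq> v1_edges V v1"
  unfolding v1_connection_def Let_def by blast

lemma v1_connection_weight_le:
  assumes F: "v1_connection V v1 w I X F" and "finite V"
    and H: "H \<subseteq> v1_edges V v1" "H \<inter> X = {}" "v1_edges V v1 \<inter> I \<subseteq> H" "2 \<le> card H"
    and nonneg: "\<forall>e\<in>H. 0 \<le> w e"
  shows "sum w F \<le> sum w H"
proof -
  define Iv where "Iv = v1_edges V v1 \<inter> I"
  define C where "C = v1_edges V v1 - I - X"
  obtain G where G: "G \<subseteq> C" "card G = 2 - card Iv" "F = Iv \<union> G"
    and greedy: "\<forall>e\<in>G. \<forall>e'\<in>C - G. w e \<le> w e'"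
    using F unfolding v1_connection_def Let_def Iv_def C_def by blast
  from finite_v1_edges[OF \<open>finite V\<close>] have fin: "finite C" "finite Iv" "finite H"
    using H(1) unfolding C_def Iv_def by (auto intro: finite_subset)
  have Iv_H: "Iv \<subseteq> H" using H(3) unfolding Iv_def .
  have "H - Iv \<subseteq> C" using H(1,2) unfolding C_def Iv_def by blast
  moreover have "card G \<le> card (H - Iv)"
    using G(2) H(4) Iv_H fin(2) by (simp add: card_Diff_subset)
  ultimately have "sum w G \<le> sum w (H - Iv)"
    using greedy_subset_sum_le[OF fin(1) G(1)] greedy nonneg by blast
  moreover have "sum w F = sum w Iv + sum w G"
    unfolding G(3) using fin G(1) by (intro sum.union_disjoint) (auto simp: C_def Iv_def intro: finite_subset)
  moreover have "sum w H = sum w Iv + sum w (H - Iv)"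
    using sum.subset_diff[OF Iv_H fin(3), of w] by linarith
  ultimately show ?thesis by linarith
qed

theorem theorem1:
  fixes V :: "'a set" and v1 :: 'a and w :: "'a set \<Rightarrow> real"
    and I X g OT :: "'a set set"
  assumes "finite V" and "v1 \<in> V"
    and "\<forall>e \<in> complete_edges V. w e \<ge> 0"
    and "I \<subseteq> complete_edges V" and "X \<subseteq> complete_edges V" and "I \<inter> X = {}"
    and "hamiltonian_cycle V g" and "I \<subseteq> g" and "g \<inter> X = {}"
    and "constrained_one_tree V v1 w I X OT"
  shows "(\<Sum>e\<in>OT. w e) \<le> (\<Sum>e\<in>g. w e)"
proof -
  obtain T F where T: "constrained_mst (V - {v1}) w I X T"
    and F: "v1_connection V v1 w I X F" and OT: "OT = T \<union> F"
    using assms(10) unfolding constrained_one_tree_def by blast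
  define P where "P = {e \<in> g. v1 \<notin> e}"
  define H where "H = {e \<in> g. v1 \<in> e}"
  have g: "finite g" "g \<subseteq> complete_edges V"
    using hamiltonian_cycle_complete_edges[OF assms(7)] by blast+
  have "constrained_spanning (V - {v1}) I X P"
    using g assms(8,9) hamiltonian_cycle_delete_vertex[OF assms(7,2)]
    unfolding constrained_spanning_def P_def complete_edges_Diff_singleton by auto
  then have PT: "sum w T \<le> sum w P"
    using constrained_mst_weight_le[OF T] assms(3) by (simp add: complete_edges_Diff_singleton)
  have "H \<subseteq> v1_edges V v1" "v1_edges V v1 \<inter> I \<subseteq> H"
    using g(2) assms(8) unfolding H_def v1_edges_eq_complete_edges_at[OF assms(2)] by auto
  moreover have "H \<inter> X = {}" using assms(9) unfolding H_def by blast
  moreover have "\<forall>e\<in>H. 0 \<le> w e" using assms(3) g(2) unfolding H_def by blast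
  ultimately have HF: "sum w F \<le> sum w H"
    using v1_connection_weight_le[OF F assms(1)] hamiltonian_cycle_two_edges_at[OF assms(7,2)]
    unfolding H_def by blast
  have "finite T" "\<forall>e\<in>T. v1 \<notin> e"
    using prim_state_edges_complete[OF T[unfolded constrained_mst_def]]
    by (auto simp: complete_edges_Diff_singleton)
  moreover have "finite F" "\<forall>e\<in>F. v1 \<in> e"
    using v1_connection_subset[OF F] finite_v1_edges[OF assms(1), of v1]
    unfolding v1_edges_def by (auto intro: finite_subset)
  ultimately have "sum w OT = sum w T + sum w F"
    unfolding OT by (intro sum.union_disjoint) auto
  moreover have "g = P \<union> H" "P \<inter> H = {}" unfolding P_def H_def by auto
  then have "sum w g = sum w P + sum w H" using g(1) by (simp add: sum.union_disjoint)
  ultimately show ?thesis using PT HF by linarith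
qed

end
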